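(* Let $(L,\omega,\upsilon)$ be a Krein--Langer string with data $\kappa,\{x_j\},\{\omega_j\},\{\upsilon_j\}$. Define $\mathsf w(x):=\omega([0,x))$, $\mathsf v(x):=\upsilon([0,x))$ for $x\in[0,L)$, $\varsigma(x):=x+\mathsf v(x)+\int_0^x\mathsf w(t)^2dt$ for $x\in[0,L]$ (with $\varsigma(L)\in(0,\infty]$ defined by the same formula, $\mathsf v(L):=\upsilon([0,L))$), $\xi(s):=\sup\{x\in[0,L):\varsigma(x)\le s\}$ for $s\ge0$, and $$H(s):=\begin{pmatrix}1-\xi'(s)&\xi'(s)\mathsf w(\xi(s))\\ \xi'(s)\mathsf w(\xi(s))&\xi'(s)\end{pmatrix},\quad s\in[0,\infty).$$ Let $\mathsf w_k:=\sum_{i=0}^k\omega_i$ and choose $\theta_k\in(0,\pi)$ with $\cot(\theta_k)=\mathsf w_k$. Then for almost every $s\ge0$: $H(s)=H_{\pi/2}$ if $s\in(0,x_0)$; $H(s)=H_0$ if $s\in(\varsigma(x_k),\varsigma(x_k+))$ for some $k\in\{0,\dots,\kappa-1\}$; $H(s)=H_{\theta_k}$ if $s\in(\varsigma(x_k+),\varsigma(x_{k+1}))$ for some $k\in\{0,\dots,\kappa-1\}$ (with $x_\kappa:=L$ if $\kappa<\infty$); and $H(s)=H_0$ if $s\in(\varsigma(L),\infty)$. In particular, $H$ restricted to $[0,\varsigma(L))$ is a Hamburger Hamiltonian of length $\varsigma(L)$.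
   Context: Krein--Langer string: a triple $(L,\omega,\upsilon)$ where $L\in(0,\infty]$, $\kappa\in\mathbb Z_{\ge0}\cup\{\infty\}$, $0=:x_{-1}<x_0<x_1<\dots<L$ is a sequence $\{x_j\}_{j=0}^{\kappa-1}$, $\{\omega_j\}_{j=0}^{\kappa-1}$ are reals and $\{\upsilon_j\}_{j=0}^{\kappa-1}$ non-negative reals with $|\omega_j|+\upsilon_j>0$; if $\kappa=\infty$ then $x_j\to L$, and if $\kappa<\infty$ then $x_{\kappa-1}<L$; $\omega:=\sum_j\omega_j\delta_{x_j}$, $\upsilon:=\sum_j\upsilon_j\delta_{x_j}$. For $\theta\in\mathbb R$, $H_\theta:=\begin{pmatrix}\cos^2\theta&\cos\theta\sin\theta\\ \cos\theta\sin\theta&\sin^2\theta\end{pmatrix}$, so $H_0=\begin{pmatrix}1&0\\0&0\end{pmatrix}$ and $H_{\pi/2}=\begin{pmatrix}0&0\\0&1\end{pmatrix}$. A Hamburger Hamiltonian on $[0,L')$ is a function of the form $\sum_{k=0}^NH_{\vartheta_k}\mathbb 1_{[y_{k-1},y_k)}$ with $y_{-1}=0<y_0<y_1<\dots$, $\vartheta_0=\pi/2$, $\vartheta_k<\vartheta_{k+1}<\vartheta_k+\pi$, and $\vartheta_N\notin\pi\mathbb Z$ if $N<\infty$. The notation $\varsigma(x_k+)$ means the right limit of $\varsigma$ at $x_k$. *)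

theory Defs
  imports "HOL-Analysis.Analysis"
begin

text \<open>Krein--Langer string data: L in (0,inf] (as ereal), kappa in N u {inf} (as enat),
  points x j, masses omega j, upsilon j, only indices j < kappa are relevant.\<close>

definition KL_string :: "ereal \<Rightarrow> enat \<Rightarrow> (nat \<Rightarrow> real) \<Rightarrow> (nat \<Rightarrow> real) \<Rightarrow> (nat \<Rightarrow> real) \<Rightarrow> bool" where
  "KL_string L \<kappa> x \<omega> \<upsilon> \<longleftrightarrow>
     0 < L \<and>
     (0 < \<kappa> \<longrightarrow> 0 < x 0) \<and>
     (\<forall>j. enat (Suc j) < \<kappa> \<longrightarrow> x j < x (Suc j)) \<and>
     (\<forall>j. enat j < \<kappa> \<longrightarrow> ereal (x j) < L \<and> 0 \<le> \<upsilon> j \<and> 0 < \<bar>\<omega> j\<bar> + \<upsilon> j) \<and>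
     (\<kappa> = \<infinity> \<longrightarrow> (\<lambda>j. ereal (x j)) \<longlonglongrightarrow> L)"

definition KL_w :: "enat \<Rightarrow> (nat \<Rightarrow> real) \<Rightarrow> (nat \<Rightarrow> real) \<Rightarrow> real \<Rightarrow> real" where
  "KL_w \<kappa> x \<omega> t = (\<Sum>j \<in> {j. enat j < \<kappa> \<and> x j < t}. \<omega> j)"

definition KL_sigma :: "enat \<Rightarrow> (nat \<Rightarrow> real) \<Rightarrow> (nat \<Rightarrow> real) \<Rightarrow> (nat \<Rightarrow> real) \<Rightarrow> ereal \<Rightarrow> ereal" where
  "KL_sigma \<kappa> x \<omega> \<upsilon> y =
     y + enn2ereal (\<Sum>j. if enat j < \<kappa> \<and> ereal (x j) < y then ennreal (\<upsilon> j) else 0)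
       + enn2ereal (\<integral>\<^sup>+ t. indicator {t. 0 \<le> t \<and> ereal t < y} t * ennreal ((KL_w \<kappa> x \<omega> t)\<^sup>2) \<partial>lborel)"

definition KL_sigma_real :: "enat \<Rightarrow> (nat \<Rightarrow> real) \<Rightarrow> (nat \<Rightarrow> real) \<Rightarrow> (nat \<Rightarrow> real) \<Rightarrow> real \<Rightarrow> real" where
  "KL_sigma_real \<kappa> x \<omega> \<upsilon> t = real_of_ereal (KL_sigma \<kappa> x \<omega> \<upsilon> (ereal t))"

definition KL_sigma_plus :: "enat \<Rightarrow> (nat \<Rightarrow> real) \<Rightarrow> (nat \<Rightarrow> real) \<Rightarrow> (nat \<Rightarrow> real) \<Rightarrow> nat \<Rightarrow> real" where
  "KL_sigma_plus \<kappa> x \<omega> \<upsilon> k = Lim (at_right (x k)) (KL_sigma_real \<kappa> x \<omega> \<upsilon>)"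

definition KL_xnext :: "ereal \<Rightarrow> enat \<Rightarrow> (nat \<Rightarrow> real) \<Rightarrow> nat \<Rightarrow> ereal" where
  "KL_xnext L \<kappa> x j = (if enat j < \<kappa> then ereal (x j) else L)"

definition KL_xi :: "ereal \<Rightarrow> enat \<Rightarrow> (nat \<Rightarrow> real) \<Rightarrow> (nat \<Rightarrow> real) \<Rightarrow> (nat \<Rightarrow> real) \<Rightarrow> real \<Rightarrow> real" where
  "KL_xi L \<kappa> x \<omega> \<upsilon> s = Sup {t. 0 \<le> t \<and> ereal t < L \<and> KL_sigma \<kappa> x \<omega> \<upsilon> (ereal t) \<le> ereal s}"

definition mat2 :: "real \<Rightarrow> real \<Rightarrow> real \<Rightarrow> real \<Rightarrow> real^2^2" where
  "mat2 a b c d = vector [vector [a, b], vector [c, d]]"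

definition Hth :: "real \<Rightarrow> real^2^2" where
  "Hth \<theta> = mat2 ((cos \<theta>)\<^sup>2) (cos \<theta> * sin \<theta>) (cos \<theta> * sin \<theta>) ((sin \<theta>)\<^sup>2)"

definition KL_H :: "ereal \<Rightarrow> enat \<Rightarrow> (nat \<Rightarrow> real) \<Rightarrow> (nat \<Rightarrow> real) \<Rightarrow> (nat \<Rightarrow> real) \<Rightarrow> real \<Rightarrow> real^2^2" where
  "KL_H L \<kappa> x \<omega> \<upsilon> s =
     (let d = deriv (KL_xi L \<kappa> x \<omega> \<upsilon>) s; a = KL_xi L \<kappa> x \<omega> \<upsilon> s
      in mat2 (1 - d) (d * KL_w \<kappa> x \<omega> a) (d * KL_w \<kappa> x \<omega> a) d)"

text \<open>Hamburger Hamiltonian on [0,Lp): (a.e.) equal to sum_{k=0}^N H_{theta_k} 1_{[y_{k-1},y_k)},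
  y_{-1} = 0 < y_0 < y_1 < ..., with y_N = Lp if N finite and y_k -> Lp if N infinite.\<close>
definition hamburger_hamiltonian :: "ereal \<Rightarrow> (real \<Rightarrow> real^2^2) \<Rightarrow> bool" where
  "hamburger_hamiltonian Lp Hf \<longleftrightarrow>
     (\<exists>(N::enat) (y::nat \<Rightarrow> ereal) (\<phi>::nat \<Rightarrow> real).
        0 < y 0 \<and>
        (\<forall>k. enat (Suc k) \<le> N \<longrightarrow> y k < y (Suc k)) \<and>
        \<phi> 0 = pi / 2 \<and>
        (\<forall>k. enat (Suc k) \<le> N \<longrightarrow> \<phi> k < \<phi> (Suc k) \<and> \<phi> (Suc k) < \<phi> k + pi) \<and>
        (N \<noteq> \<infinity> \<longrightarrow> (\<nexists>n::int. \<phi> (the_enat N) = of_int n * pi)) \<and>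
        (N \<noteq> \<infinity> \<longrightarrow> y (the_enat N) = Lp) \<and>
        (N = \<infinity> \<longrightarrow> y \<longlonglongrightarrow> Lp) \<and>
        (AE s in lborel. 0 \<le> s \<and> ereal s < Lp \<longrightarrow>
           (\<forall>k. enat k \<le> N \<longrightarrow> (if k = 0 then 0 else y (k - 1)) \<le> ereal s \<longrightarrow> ereal s < y k
                \<longrightarrow> Hf s = Hth (\<phi> k))))"

end

theory Submission
  imports Defs
begin

text \<open>\<open>\<sigma>\<close> is piecewise affine: the identity on \<open>[0, x\<^sub>0]\<close>, a jump of height \<open>\<upsilon>\<^sub>k\<close> at \<open>x\<^sub>k\<close>,
  and slope \<open>1 + w\<^sub>k\<^sup>2\<close> on \<open>(x\<^sub>k, x\<^sub>k\<^sub>+\<^sub>1]\<close>. Its generalized inverse \<open>\<xi>\<close> is therefore the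
  identity below \<open>x\<^sub>0\<close>, constant on each plateau \<open>(\<sigma>(x\<^sub>k), \<sigma>(x\<^sub>k+))\<close>, affine with slope
  \<open>1 / (1 + w\<^sub>k\<^sup>2)\<close> after it, and constant \<open>L\<close> beyond \<open>\<sigma>(L)\<close>; reading off \<open>\<xi>'\<close> and \<open>w \<circ> \<xi>\<close>
  gives \<open>H\<^sub>\<pi>\<^sub>/\<^sub>2\<close>, \<open>H\<^sub>0\<close>, \<open>H\<^sub>\<theta>\<^sub>k\<close> and \<open>H\<^sub>0\<close>. Dropping empty plateaus (\<open>\<upsilon>\<^sub>k = 0\<close>), these
  intervals tile \<open>[0, \<sigma>(L))\<close> up to countably many endpoints, and consecutive angles are
  incongruent modulo \<open>\<pi>\<close>: a plateau (angle \<open>0\<close>) is followed by some \<open>\<theta>\<^sub>k \<in> (0, \<pi>)\<close>, and two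
  adjacent gaps are separated by an atom with \<open>\<upsilon>\<^sub>k = 0\<close>, hence \<open>\<omega>\<^sub>k \<noteq> 0\<close>, which changes the
  cotangent. Lifting each angle into \<open>(\<phi>\<^sub>n, \<phi>\<^sub>n + \<pi>)\<close> yields the data of a Hamburger
  Hamiltonian.\<close>

lemma enat_Suc_less_imp_less: "enat (Suc k) < n \<Longrightarrow> enat k < n"
  by (meson Suc_ile_eq less_imp_le order_le_less_trans enat_ord_simps(2) lessI)

lemma nn_integral_indicator_atLeastLessThan_split:
  fixes f :: "real \<Rightarrow> ennreal"
  assumes "f \<in> borel_measurable lborel" "a \<le> b" "b \<le> c"
  shows "(\<integral>\<^sup>+ s. indicator {a..<c} s * f s \<partial>lborel)
       = (\<integral>\<^sup>+ s. indicator {a..<b} s * f s \<partial>lborel) + (\<integral>\<^sup>+ s. indicator {b..<c} s * f s \<partial>lborel)"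
proof -
  have "(\<integral>\<^sup>+ s. indicator {a..<c} s * f s \<partial>lborel)
      = (\<integral>\<^sup>+ s. indicator {a..<b} s * f s + indicator {b..<c} s * f s \<partial>lborel)"
    by (rule nn_integral_cong) (use assms in \<open>simp add: indicator_def\<close>)
  also have "\<dots> = (\<integral>\<^sup>+ s. indicator {a..<b} s * f s \<partial>lborel) + (\<integral>\<^sup>+ s. indicator {b..<c} s * f s \<partial>lborel)"
    using assms(1) by (intro nn_integral_add) auto
  finally show ?thesis .
qed

lemma nn_integral_indicator_const_on_interval:
  fixes f :: "real \<Rightarrow> ennreal"
  assumes "\<And>s. u < s \<Longrightarrow> s < t \<Longrightarrow> f s = c" "u \<le> t"
  shows "(\<integral>\<^sup>+ s. indicator {u..<t} s * f s \<partial>lborel) = c * ennreal (t - u)"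
proof -
  have "AE s in lborel. indicator {u..<t} s * f s = c * indicator {u<..<t} s"
    using AE_lborel_singleton[of u] by eventually_elim (auto simp: indicator_def assms(1))
  then have "(\<integral>\<^sup>+ s. indicator {u..<t} s * f s \<partial>lborel) = (\<integral>\<^sup>+ s. c * indicator {u<..<t} s \<partial>lborel)"
    by (rule nn_integral_cong_AE)
  also have "\<dots> = c * ennreal (t - u)" using assms(2) by (simp add: nn_integral_cmult_indicator)
  finally show ?thesis .
qed

lemma SUP_eq_attained:
  fixes f :: "'a \<Rightarrow> 'b::complete_lattice"
  assumes "\<And>m. f m \<le> c" "f n = c"
  shows "(SUP m. f m) = c"
  by (rule antisym) (auto intro: SUP_least assms(1) SUP_upper2[where i=n] simp: assms(2))

section \<open>Angles\<close>

lemma Hth_add_int_mult_pi: "Hth (t + of_int z * pi) = Hth t"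
proof -
  have s: "sin (of_int z * pi) = 0" using sin_npi_int[of z] by (simp add: mult.commute)
  have c: "(cos (of_int z * pi))\<^sup>2 = 1" using s sin_cos_squared_add[of "of_int z * pi"] by simp
  have "cos (t + of_int z * pi) = cos t * cos (of_int z * pi)"
       "sin (t + of_int z * pi) = sin t * cos (of_int z * pi)"
    unfolding cos_add sin_add s by simp_all
  then show ?thesis unfolding Hth_def using c
    by (simp add: power_mult_distrib algebra_simps power2_eq_square)
qed

lemma Hth_pi_half: "Hth (pi / 2) = mat2 0 0 0 1"
  unfolding Hth_def by simp

lemma Hth_zero: "Hth 0 = mat2 1 0 0 0"
  unfolding Hth_def by simp

lemma Hth_cot:
  assumes "0 < \<theta>" "\<theta> < pi" "cot \<theta> = c"
  shows "Hth \<theta> = mat2 (c\<^sup>2 / (1 + c\<^sup>2)) (c / (1 + c\<^sup>2)) (c / (1 + c\<^sup>2)) (1 / (1 + c\<^sup>2))"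
proof -
  have sin_pos: "0 < sin \<theta>" using assms by (simp add: sin_gt_zero)
  have cos_eq: "cos \<theta> = c * sin \<theta>" using assms(3) sin_pos unfolding cot_def by (simp add: field_simps)
  have "(sin \<theta>)\<^sup>2 + (cos \<theta>)\<^sup>2 = 1" by simp
  then have "(sin \<theta>)\<^sup>2 * (1 + c\<^sup>2) = 1" unfolding cos_eq by (simp add: algebra_simps power_mult_distrib)
  moreover have "0 < 1 + c\<^sup>2" by (simp add: add_pos_nonneg)
  ultimately have sin2: "(sin \<theta>)\<^sup>2 = 1 / (1 + c\<^sup>2)" by (simp add: field_simps)
  have "cos \<theta> * sin \<theta> = c * (sin \<theta>)\<^sup>2" unfolding cos_eq by (simp add: power2_eq_square)
  then show ?thesis unfolding Hth_def sin2 cos_eq power_mult_distrib by simp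
qed

lemma of_int_mult_pi_not_between: "0 < of_int z * pi \<Longrightarrow> of_int z * pi < pi \<Longrightarrow> False"
proof -
  assume "0 < of_int z * pi" "of_int z * pi < pi"
  then have "(0::real) < of_int z" "of_int z < (1::real)" by (auto simp: zero_less_mult_iff)
  then show False by simp
qed

lemma of_int_mult_pi_abs_less: "\<bar>of_int z * pi\<bar> < pi \<Longrightarrow> z = 0"
proof -
  assume "\<bar>of_int z * pi\<bar> < pi"
  then have "\<bar>of_int z\<bar> < (1::real)" by (simp add: abs_mult)
  then show "z = 0" by linarith
qed

definition arccot :: "real \<Rightarrow> real" where
  "arccot c = pi / 2 - arctan c"

lemma arccot_bounds: "0 < arccot c" "arccot c < pi"
  unfolding arccot_def using arctan_bounded[of c] by auto

lemma cot_arccot: "cot (arccot c) = c"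
proof -
  have "cot (arccot c) = sin (arctan c) / cos (arctan c)"
    unfolding arccot_def cot_def cos_diff sin_diff by simp
  also have "\<dots> = c" using tan_arctan[of c] unfolding tan_def .
  finally show ?thesis .
qed

text \<open>The representative of \<open>t\<close> modulo \<open>\<pi>\<close> in \<open>(a, a + \<pi>]\<close>.\<close>

definition lift_above :: "real \<Rightarrow> real \<Rightarrow> real" where
  "lift_above a t = t + pi * (of_int \<lfloor>(a - t) / pi\<rfloor> + 1)"

lemma lift_above_gt: "a < lift_above a t"
proof -
  have "(a - t) / pi < of_int \<lfloor>(a - t) / pi\<rfloor> + 1" by linarith
  then have "a - t < pi * (of_int \<lfloor>(a - t) / pi\<rfloor> + 1)" by (simp add: field_simps)
  then show ?thesis unfolding lift_above_def by simp
qed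

lemma lift_above_less:
  assumes "\<nexists>z::int. t = a + of_int z * pi"
  shows "lift_above a t < a + pi"
proof -
  let ?z = "\<lfloor>(a - t) / pi\<rfloor>"
  have "of_int ?z \<noteq> (a - t) / pi"
  proof
    assume h: "of_int ?z = (a - t) / pi"
    have "a - t = (a - t) / pi * pi" by simp
    also have "\<dots> = of_int ?z * pi" unfolding h ..
    finally have "t = a + of_int (- ?z) * pi" by simp
    then show False using assms by blast
  qed
  then have "of_int ?z < (a - t) / pi" by linarith
  then have "pi * of_int ?z < a - t" by (simp add: field_simps)
  then show ?thesis unfolding lift_above_def by (simp add: algebra_simps)
qed

lemma lift_above_cong: "\<exists>z::int. lift_above a t = t + of_int z * pi"
  unfolding lift_above_def by (rule exI[of _ "\<lfloor>(a - t) / pi\<rfloor> + 1"]) (simp add: algebra_simps)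

section \<open>Enumerating the intervals of constancy\<close>

text \<open>A state \<open>(m, False)\<close> stands for the interval on which \<open>\<xi>\<close> runs through
  \<open>(x\<^sub>m\<^sub>-\<^sub>1, x\<^sub>m)\<close> (through \<open>(0, x\<^sub>0)\<close> if \<open>m = 0\<close>), a state \<open>(m, True)\<close> for the interval on which
  \<open>\<xi>\<close> rests at \<open>x\<^sub>m\<^sub>-\<^sub>1\<close>. The latter has length \<open>\<upsilon>\<^sub>m\<^sub>-\<^sub>1\<close> and is skipped when this vanishes.\<close>

fun next_interval :: "(nat \<Rightarrow> real) \<Rightarrow> nat \<times> bool \<Rightarrow> nat \<times> bool" where
  "next_interval v (m, True) = (m, False)"
| "next_interval v (m, False) = (Suc m, 0 < v m)"

definition interval_seq :: "(nat \<Rightarrow> real) \<Rightarrow> nat \<Rightarrow> nat \<times> bool" where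
  "interval_seq v n = (next_interval v ^^ n) (0, False)"

lemma interval_seq_0 [simp]: "interval_seq v 0 = (0, False)"
  unfolding interval_seq_def by simp

lemma interval_seq_Suc: "interval_seq v (Suc n) = next_interval v (interval_seq v n)"
  unfolding interval_seq_def by simp

lemma incseq_fst_interval_seq: "incseq (\<lambda>n. fst (interval_seq v n))"
proof (rule incseq_SucI)
  fix n
  obtain m b where "interval_seq v n = (m, b)" by fastforce
  then show "fst (interval_seq v n) \<le> fst (interval_seq v (Suc n))"
    unfolding interval_seq_Suc by (cases b) auto
qed

lemma interval_seq_plateau:
  "snd (interval_seq v n) \<Longrightarrow> 0 < fst (interval_seq v n) \<and> 0 < v (fst (interval_seq v n) - 1)"
proof (induction n)
  case (Suc n)
  obtain m b where "interval_seq v n = (m, b)" by fastforce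
  with Suc show ?case unfolding interval_seq_Suc by (cases b) auto
qed simp

definition interval_index :: "(nat \<Rightarrow> real) \<Rightarrow> nat \<Rightarrow> nat" where
  "interval_index v m = m + card {i. i < m \<and> 0 < v i}"

lemma interval_index_Suc:
  "interval_index v (Suc m) = (if 0 < v m then Suc (Suc (interval_index v m)) else Suc (interval_index v m))"
proof -
  have "{i. i < Suc m \<and> 0 < v i} = (if 0 < v m then insert m else id) {i. i < m \<and> 0 < v i}"
    by (auto simp: less_Suc_eq)
  then show ?thesis unfolding interval_index_def by simp
qed

lemma interval_seq_index: "interval_seq v (interval_index v m) = (m, False)"
proof (induction m)
  case (Suc m)
  then show ?case by (simp add: interval_index_Suc interval_seq_Suc)
qed (simp add: interval_index_def)

lemma strict_mono_interval_index: "strict_mono (interval_index v)"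
  by (rule strict_monoI_Suc) (simp add: interval_index_Suc)

section \<open>The function \<open>\<sigma>\<close> of a Krein--Langer string\<close>

locale krein_langer_string =
  fixes L :: ereal and \<kappa> :: enat and x \<omega> \<upsilon> :: "nat \<Rightarrow> real"
  assumes string: "KL_string L \<kappa> x \<omega> \<upsilon>"
begin

abbreviation "w \<equiv> KL_w \<kappa> x \<omega>"
abbreviation "\<sigma> \<equiv> KL_sigma \<kappa> x \<omega> \<upsilon>"
abbreviation "\<sigma>\<^sub>r \<equiv> KL_sigma_real \<kappa> x \<omega> \<upsilon>"
abbreviation "\<sigma>plus \<equiv> KL_sigma_plus \<kappa> x \<omega> \<upsilon>"
abbreviation "xnext \<equiv> KL_xnext L \<kappa> x"
abbreviation "\<xi> \<equiv> KL_xi L \<kappa> x \<omega> \<upsilon>"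

lemma L_pos: "0 < L"
  using string unfolding KL_string_def by auto

lemma upsilon_nonneg: "enat j < \<kappa> \<Longrightarrow> 0 \<le> \<upsilon> j"
  using string unfolding KL_string_def by auto

lemma mass_pos: "enat j < \<kappa> \<Longrightarrow> 0 < \<bar>\<omega> j\<bar> + \<upsilon> j"
  using string unfolding KL_string_def by auto

lemma x_less_L: "enat j < \<kappa> \<Longrightarrow> ereal (x j) < L"
  using string unfolding KL_string_def by auto

lemma x_less_Suc: "enat (Suc j) < \<kappa> \<Longrightarrow> x j < x (Suc j)"
  using string unfolding KL_string_def by auto

lemma x_tendsto_L: "\<kappa> = \<infinity> \<Longrightarrow> (\<lambda>j. ereal (x j)) \<longlonglongrightarrow> L"
  using string unfolding KL_string_def by auto

lemma x_strict_mono: "j < k \<Longrightarrow> enat k < \<kappa> \<Longrightarrow> x j < x k"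
proof (induction k)
  case (Suc k)
  then show ?case
    using enat_Suc_less_imp_less[of k] x_less_Suc[of k] by (cases "j = k") auto
qed simp

lemma x_mono: "j \<le> k \<Longrightarrow> enat k < \<kappa> \<Longrightarrow> x j \<le> x k"
  using x_strict_mono by (metis le_less order_refl)

lemma x_pos: "enat k < \<kappa> \<Longrightarrow> 0 < x k"
proof -
  assume k: "enat k < \<kappa>"
  then have "0 < \<kappa>" by (metis zero_le le_less_trans)
  then have "0 < x 0" using string unfolding KL_string_def by auto
  then show ?thesis using x_mono[of 0 k] k by force
qed

lemma xnext_le_L: "xnext k \<le> L"
  unfolding KL_xnext_def using x_less_L by (auto simp: less_imp_le)

lemma x_less_xnext_Suc: "enat k < \<kappa> \<Longrightarrow> ereal (x k) < xnext (Suc k)"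
  unfolding KL_xnext_def using x_less_Suc x_less_L by auto

lemma xnext_0_pos: "0 < xnext 0"
  unfolding KL_xnext_def using x_pos L_pos by (auto simp: zero_enat_def)

definition atoms_below :: "real \<Rightarrow> nat set" where
  "atoms_below t = {j. enat j < \<kappa> \<and> x j < t}"

lemma atoms_below_mono: "s \<le> t \<Longrightarrow> atoms_below s \<subseteq> atoms_below t"
  unfolding atoms_below_def by auto

lemma atoms_below_initial:
  assumes "ereal t \<le> xnext 0"
  shows "atoms_below t = {}"
proof (cases "0 < \<kappa>")
  case True
  then have "t \<le> x 0" using assms unfolding KL_xnext_def by (simp add: zero_enat_def)
  then show ?thesis unfolding atoms_below_def using x_mono[of 0] by force
next
  case False
  then show ?thesis unfolding atoms_below_def by (auto simp: zero_enat_def[symmetric])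
qed

lemma atoms_below_x:
  assumes "enat k < \<kappa>"
  shows "atoms_below (x k) = {..<k}"
proof
  show "{..<k} \<subseteq> atoms_below (x k)" unfolding atoms_below_def using x_strict_mono assms
    by (auto intro: order_less_trans[OF enat_ord_simps(2)[THEN iffD2]])
  show "atoms_below (x k) \<subseteq> {..<k}" unfolding atoms_below_def using x_mono assms
    by (force simp: not_less[symmetric])
qed

lemma atoms_below_gap:
  assumes k: "enat k < \<kappa>" and t: "x k < t" "ereal t \<le> xnext (Suc k)"
  shows "atoms_below t = {..k}"
proof
  show "{..k} \<subseteq> atoms_below t"
  proof
    fix j assume "j \<in> {..k}"
    then have j: "j \<le> k" by simp
    then have "enat j < \<kappa>" using k by (meson enat_ord_simps(1) le_less_trans)
    moreover have "x j < t" using x_mono[OF j k] t(1) by linarith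
    ultimately show "j \<in> atoms_below t" unfolding atoms_below_def by simp
  qed
  show "atoms_below t \<subseteq> {..k}"
  proof
    fix j assume j: "j \<in> atoms_below t"
    show "j \<in> {..k}"
    proof (rule ccontr)
      assume "j \<notin> {..k}"
      then have jk: "Suc k \<le> j" by auto
      have j': "enat j < \<kappa>" "x j < t" using j unfolding atoms_below_def by auto
      then have "enat (Suc k) < \<kappa>" using jk by (meson enat_ord_simps(1) le_less_trans)
      then have "t \<le> x (Suc k)" using t unfolding KL_xnext_def by auto
      then show False using x_mono[OF jk j'(1)] j'(2) by simp
    qed
  qed
qed

lemma w_eq_sum: "w t = sum \<omega> (atoms_below t)"
  unfolding KL_w_def atoms_below_def by simp

text \<open>On \<open>(-\<infinity>, t]\<close> the function \<open>w\<close> agrees with a finite sum of step functions, whose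
  measurability is evident; this is how the integrals in \<open>\<sigma>\<close> are computed.\<close>

definition w_restr :: "nat set \<Rightarrow> real \<Rightarrow> real" where
  "w_restr F s = (\<Sum>j\<in>F. if x j < s then \<omega> j else 0)"

lemma w_eq_w_restr: "finite (atoms_below t) \<Longrightarrow> s \<le> t \<Longrightarrow> w s = w_restr (atoms_below t) s"
proof -
  assume "finite (atoms_below t)" "s \<le> t"
  moreover from \<open>s \<le> t\<close> have "atoms_below s = {j \<in> atoms_below t. x j < s}"
    unfolding atoms_below_def by auto
  ultimately show ?thesis unfolding w_eq_sum w_restr_def by (simp add: sum.inter_filter)
qed

lemma borel_measurable_w_restr [measurable]:
  "(\<lambda>s. ennreal ((w_restr F s)\<^sup>2)) \<in> borel_measurable lborel"
  unfolding w_restr_def by measurable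

abbreviation w2_integral :: "real \<Rightarrow> ennreal" where
  "w2_integral t \<equiv> \<integral>\<^sup>+ s. indicator {s. 0 \<le> s \<and> ereal s < ereal t} s * ennreal ((w s)\<^sup>2) \<partial>lborel"

lemma w2_integral_eq_w_restr:
  assumes "finite (atoms_below t)" "u \<le> t"
  shows "w2_integral u = (\<integral>\<^sup>+ s. indicator {0..<u} s * ennreal ((w_restr (atoms_below t) s)\<^sup>2) \<partial>lborel)"
  by (rule nn_integral_cong) (use assms w_eq_w_restr in \<open>auto simp: indicator_def\<close>)

lemma w2_integral_step:
  assumes "0 \<le> u" "u \<le> t" "finite (atoms_below t)"
    and const: "\<And>s. u < s \<Longrightarrow> s \<le> t \<Longrightarrow> atoms_below s = atoms_below t"
  shows "w2_integral t = w2_integral u + ennreal ((sum \<omega> (atoms_below t))\<^sup>2 * (t - u))"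
proof -
  let ?f = "\<lambda>s. ennreal ((w_restr (atoms_below t) s)\<^sup>2)"
  have "\<And>s. u < s \<Longrightarrow> s < t \<Longrightarrow> ?f s = ennreal ((sum \<omega> (atoms_below t))\<^sup>2)"
    using const w_eq_w_restr[OF assms(3)] w_eq_sum by (metis less_imp_le)
  then have "(\<integral>\<^sup>+ s. indicator {u..<t} s * ?f s \<partial>lborel)
      = ennreal ((sum \<omega> (atoms_below t))\<^sup>2) * ennreal (t - u)"
    using assms(2) by (rule nn_integral_indicator_const_on_interval)
  then show ?thesis
    using nn_integral_indicator_atLeastLessThan_split[OF borel_measurable_w_restr, of 0 u t] assms
    unfolding w2_integral_eq_w_restr[OF assms(3) order_refl] w2_integral_eq_w_restr[OF assms(3,2)]
    by (simp add: ennreal_mult)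
qed

lemma upsilon_series_eq_sum:
  assumes "finite (atoms_below t)"
  shows "(\<Sum>j. if enat j < \<kappa> \<and> ereal (x j) < ereal t then ennreal (\<upsilon> j) else 0)
       = ennreal (sum \<upsilon> (atoms_below t))"
proof -
  have "(\<Sum>j. if enat j < \<kappa> \<and> ereal (x j) < ereal t then ennreal (\<upsilon> j) else 0)
      = (\<Sum>j\<in>atoms_below t. ennreal (\<upsilon> j))"
    by (subst suminf_finite[OF assms]) (auto simp: atoms_below_def intro: sum.cong)
  also have "\<dots> = ennreal (sum \<upsilon> (atoms_below t))"
    by (rule sum_ennreal) (auto simp: atoms_below_def upsilon_nonneg)
  finally show ?thesis .
qed

lemma sigma_eq_finite:
  assumes "finite (atoms_below t)"
  shows "\<sigma> (ereal t) = ereal t + ereal (sum \<upsilon> (atoms_below t)) + enn2ereal (w2_integral t)"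
proof -
  have "0 \<le> sum \<upsilon> (atoms_below t)" by (rule sum_nonneg) (auto simp: atoms_below_def upsilon_nonneg)
  then show ?thesis
    unfolding KL_sigma_def upsilon_series_eq_sum[OF assms] by (simp add: enn2ereal_ennreal)
qed

lemma sigma_step:
  assumes "0 \<le> u" "u \<le> t" "finite (atoms_below t)"
    and "\<And>s. u < s \<Longrightarrow> s \<le> t \<Longrightarrow> atoms_below s = atoms_below t"
  shows "\<sigma> (ereal t) = \<sigma> (ereal u)
    + ereal ((t - u) + sum \<upsilon> (atoms_below t - atoms_below u) + (sum \<omega> (atoms_below t))\<^sup>2 * (t - u))"
proof -
  have sub: "atoms_below u \<subseteq> atoms_below t" using atoms_below_mono assms(2) .
  then have fin: "finite (atoms_below u)" using assms(3) finite_subset by blast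
  have "0 \<le> (sum \<omega> (atoms_below t))\<^sup>2 * (t - u)" using assms by simp
  then have "enn2ereal (w2_integral t) = enn2ereal (w2_integral u) + ereal ((sum \<omega> (atoms_below t))\<^sup>2 * (t - u))"
    using w2_integral_step[OF assms] by (simp add: plus_ennreal.rep_eq enn2ereal_ennreal)
  moreover have "0 \<le> enn2ereal (w2_integral u)" by simp
  moreover have "sum \<upsilon> (atoms_below t) = sum \<upsilon> (atoms_below t - atoms_below u) + sum \<upsilon> (atoms_below u)"
    using sum.subset_diff[OF sub assms(3)] .
  ultimately show ?thesis unfolding sigma_eq_finite[OF assms(3)] sigma_eq_finite[OF fin]
    by (cases "enn2ereal (w2_integral u)") (auto simp: algebra_simps)
qed

lemma sigma_initial:
  assumes "0 \<le> t" "ereal t \<le> xnext 0"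
  shows "\<sigma> (ereal t) = ereal t"
proof -
  have "atoms_below s = {}" if "s \<le> t" for s
    using atoms_below_initial that assms(2) by (meson ereal_less_eq(3) order_trans)
  moreover have "\<sigma> (ereal 0) = 0"
    using sigma_eq_finite[of 0] atoms_below_initial[of 0] xnext_0_pos
    by (simp add: zero_ereal_def zero_ennreal.rep_eq)
  ultimately show ?thesis
    using sigma_step[OF order_refl assms(1)] by (simp add: zero_ereal_def)
qed

lemma sigma_gap:
  assumes k: "enat k < \<kappa>" and t: "x k < t" "ereal t \<le> xnext (Suc k)"
  shows "\<sigma> (ereal t) = \<sigma> (ereal (x k)) + ereal (\<upsilon> k + (1 + (\<Sum>i\<le>k. \<omega> i)\<^sup>2) * (t - x k))"
proof -
  have gap: "atoms_below s = {..k}" if "x k < s" "s \<le> t" for s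
    using atoms_below_gap[OF k] that t(2) by (meson ereal_less_eq(3) order_trans)
  have "{..k} - {..<k} = {k}" by auto
  then show ?thesis
    using sigma_step[OF less_imp_le[OF x_pos[OF k]] less_imp_le[OF t(1)]] gap[OF t(1) order_refl]
      gap atoms_below_x[OF k]
    by (simp add: algebra_simps)
qed

lemma sigma_x_finite: "enat k < \<kappa> \<Longrightarrow> \<sigma> (ereal (x k)) = ereal (\<sigma>\<^sub>r (x k))"
proof (induction k)
  case 0
  then have "ereal (x 0) \<le> xnext 0" unfolding KL_xnext_def by (simp add: zero_enat_def)
  then show ?case using sigma_initial x_pos[OF 0] unfolding KL_sigma_real_def by simp
next
  case (Suc k)
  have k: "enat k < \<kappa>" using enat_Suc_less_imp_less Suc.prems .
  have "xnext (Suc k) = ereal (x (Suc k))" unfolding KL_xnext_def using Suc.prems by simp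
  then have "\<bar>\<sigma> (ereal (x (Suc k)))\<bar> \<noteq> \<infinity>"
    using sigma_gap[OF k x_less_Suc[OF Suc.prems]] Suc.IH[OF k] by simp
  then show ?case unfolding KL_sigma_real_def by (metis ereal_real')
qed

lemma sigma_mono:
  assumes "y \<le> y'"
  shows "\<sigma> y \<le> \<sigma> y'"
proof -
  have "(\<Sum>j. if enat j < \<kappa> \<and> ereal (x j) < y then ennreal (\<upsilon> j) else 0)
     \<le> (\<Sum>j. if enat j < \<kappa> \<and> ereal (x j) < y' then ennreal (\<upsilon> j) else 0)"
    using assms by (intro suminf_le summableI) (auto intro: order_less_le_trans)
  moreover have "(\<integral>\<^sup>+ t. indicator {t. 0 \<le> t \<and> ereal t < y} t * ennreal ((w t)\<^sup>2) \<partial>lborel)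
     \<le> (\<integral>\<^sup>+ t. indicator {t. 0 \<le> t \<and> ereal t < y'} t * ennreal ((w t)\<^sup>2) \<partial>lborel)"
    using assms by (intro nn_integral_mono) (auto simp: indicator_def intro: order_less_le_trans)
  ultimately show ?thesis
    unfolding KL_sigma_def using assms by (intro add_mono) (simp_all add: less_eq_ennreal.rep_eq)
qed

lemma sigma_ge: "y \<le> \<sigma> y"
  unfolding KL_sigma_def by (simp add: add_increasing2)

lemma sigma_infinity: "\<sigma> \<infinity> = \<infinity>"
  unfolding KL_sigma_def by simp

lemma sigma_xnext_0: "\<sigma> (xnext 0) = xnext 0"
  using sigma_initial xnext_0_pos sigma_infinity by (cases "xnext 0") auto

lemma sigma_plus_eq:
  assumes k: "enat k < \<kappa>"
  shows "\<sigma>plus k = \<sigma>\<^sub>r (x k) + \<upsilon> k"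
proof -
  define c where "c = 1 + (\<Sum>i\<le>k. \<omega> i)\<^sup>2"
  obtain b where b: "x k < b" "ereal b < xnext (Suc k)"
    using ereal_dense2[OF x_less_xnext_Suc[OF k]] by auto
  have "eventually (\<lambda>t. t \<in> {x k<..<b}) (at_right (x k))"
    using eventually_at_right_real[of "x k" b] b(1) by simp
  then have ev: "eventually (\<lambda>t. \<sigma>\<^sub>r (x k) + \<upsilon> k + c * (t - x k) = \<sigma>\<^sub>r t) (at_right (x k))"
  proof (rule eventually_mono)
    fix t assume t: "t \<in> {x k<..<b}"
    then have "ereal t \<le> xnext (Suc k)"
      using b(2) by (metis greaterThanLessThan_iff ereal_less_eq(3) less_imp_le order_trans)
    then have "\<sigma> (ereal t) = ereal (\<sigma>\<^sub>r (x k) + \<upsilon> k + c * (t - x k))"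
      using sigma_gap[OF k] t unfolding sigma_x_finite[OF k] c_def by simp
    then show "\<sigma>\<^sub>r (x k) + \<upsilon> k + c * (t - x k) = \<sigma>\<^sub>r t"
      unfolding KL_sigma_real_def by simp
  qed
  have "((\<lambda>t. \<sigma>\<^sub>r (x k) + \<upsilon> k + c * (t - x k)) \<longlongrightarrow> \<sigma>\<^sub>r (x k) + \<upsilon> k + c * (x k - x k)) (at_right (x k))"
    by (intro tendsto_add tendsto_const tendsto_mult tendsto_diff tendsto_ident_at)
  then have "((\<lambda>t. \<sigma>\<^sub>r (x k) + \<upsilon> k + c * (t - x k)) \<longlongrightarrow> \<sigma>\<^sub>r (x k) + \<upsilon> k) (at_right (x k))"
    by simp
  then have "(\<sigma>\<^sub>r \<longlongrightarrow> \<sigma>\<^sub>r (x k) + \<upsilon> k) (at_right (x k))"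
    using ev by (rule Lim_transform_eventually)
  then show ?thesis unfolding KL_sigma_plus_def by (rule tendsto_Lim[OF trivial_limit_at_right_real])
qed

lemma sigma_plus_less_sigma_xnext:
  assumes k: "enat k < \<kappa>"
  shows "ereal (\<sigma>plus k) < \<sigma> (xnext (Suc k))"
proof (cases "xnext (Suc k)")
  case (real X)
  then have "x k < X" using x_less_xnext_Suc[OF k] by simp
  then show ?thesis
    using sigma_gap[OF k, of X] real
    unfolding sigma_plus_eq[OF k] sigma_x_finite[OF k] by (simp add: add_pos_nonneg)
qed (use x_less_xnext_Suc[OF k] sigma_infinity in auto)

lemma sigma_right_of_x:
  assumes k: "enat k < \<kappa>" and t: "x k < t"
  shows "min (\<sigma> (xnext (Suc k))) (ereal (\<sigma>plus k + (1 + (\<Sum>i\<le>k. \<omega> i)\<^sup>2) * (t - x k))) \<le> \<sigma> (ereal t)"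
proof (cases "ereal t \<le> xnext (Suc k)")
  case True
  then show ?thesis
    using sigma_gap[OF k t] unfolding sigma_plus_eq[OF k] sigma_x_finite[OF k]
    by (simp add: add.assoc min_le_iff_disj)
next
  case False
  then show ?thesis using sigma_mono[of "xnext (Suc k)" "ereal t"] by (simp add: min.coboundedI1)
qed

section \<open>The generalized inverse \<open>\<xi>\<close> and the Hamiltonian\<close>

lemma xi_eqI:
  assumes "0 \<le> a" "ereal a < L" "\<sigma> (ereal a) \<le> ereal s"
    and "\<And>t. a < t \<Longrightarrow> ereal t < L \<Longrightarrow> ereal s < \<sigma> (ereal t)"
  shows "\<xi> s = a"
  unfolding KL_xi_def
proof (rule cSup_eq_maximum)
  show "a \<in> {t. 0 \<le> t \<and> ereal t < L \<and> \<sigma> (ereal t) \<le> ereal s}" using assms by auto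
  fix t assume "t \<in> {t. 0 \<le> t \<and> ereal t < L \<and> \<sigma> (ereal t) \<le> ereal s}"
  then show "t \<le> a" using assms(4)[of t] by force
qed

lemma xi_beyond_sigma_L:
  assumes "L = ereal l" "\<sigma> L < ereal s"
  shows "\<xi> s = l"
proof -
  have "{t. 0 \<le> t \<and> ereal t < L \<and> \<sigma> (ereal t) \<le> ereal s} = {0..<l}"
  proof (intro set_eqI iffI)
    fix t assume t: "t \<in> {0..<l}"
    then have "\<sigma> (ereal t) \<le> \<sigma> L" using assms(1) by (intro sigma_mono) simp
    then show "t \<in> {t. 0 \<le> t \<and> ereal t < L \<and> \<sigma> (ereal t) \<le> ereal s}"
      using assms t by auto
  qed (use assms in auto)
  moreover have "0 < l" using L_pos assms(1) by simp
  ultimately show ?thesis unfolding KL_xi_def by (simp add: cSup_atLeastLessThan)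
qed

lemma deriv_xi_eqI:
  assumes "open U" "s \<in> U" "\<And>s'. s' \<in> U \<Longrightarrow> g s' = \<xi> s'" "(g has_real_derivative D) (at s)"
  shows "deriv \<xi> s = D"
  by (rule DERIV_imp_deriv, rule has_field_derivative_transform_within_open[OF assms(4,1,2)])
    (use assms(3) in blast)

lemma KL_H_eq:
  "KL_H L \<kappa> x \<omega> \<upsilon> s = mat2 (1 - deriv \<xi> s) (deriv \<xi> s * w (\<xi> s)) (deriv \<xi> s * w (\<xi> s)) (deriv \<xi> s)"
  unfolding KL_H_def Let_def ..

lemma KL_H_initial:
  assumes "0 < s" "ereal s < xnext 0"
  shows "KL_H L \<kappa> x \<omega> \<upsilon> s = Hth (pi / 2)"
proof -
  obtain b where b: "s < b" "ereal b < xnext 0" using ereal_dense2[OF assms(2)] by auto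
  have xi_id: "s' = \<xi> s'" if s': "s' \<in> {0<..<b}" for s'
  proof (rule sym, rule xi_eqI)
    have "ereal s' < xnext 0" using s' b(2) order.strict_trans[of "ereal s'" "ereal b"] by simp
    then show "\<sigma> (ereal s') \<le> ereal s'" "ereal s' < L"
      using sigma_initial[of s'] s' xnext_le_L[of 0] by (simp_all add: order_less_le_trans)
    show "ereal s' < \<sigma> (ereal t)" if "s' < t" for t
      using that sigma_ge[of "ereal t"] order_less_le_trans[of "ereal s'" "ereal t"] by simp
  qed (use s' in simp)
  have s: "s \<in> {0<..<b}" using assms b by simp
  have "deriv \<xi> s = 1" by (rule deriv_xi_eqI[OF _ s xi_id DERIV_ident]) simp
  moreover have "w (\<xi> s) = 0"
    unfolding xi_id[OF s, symmetric] w_eq_sum atoms_below_initial[OF less_imp_le[OF assms(2)]] by simp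
  ultimately show ?thesis unfolding KL_H_eq Hth_pi_half by simp
qed

lemma KL_H_plateau:
  assumes k: "enat k < \<kappa>" and s: "\<sigma> (ereal (x k)) < ereal s" "s < \<sigma>plus k"
  shows "KL_H L \<kappa> x \<omega> \<upsilon> s = Hth 0"
proof -
  define U where "U = {\<sigma>\<^sub>r (x k)<..<\<sigma>plus k}"
  have xi_const: "x k = \<xi> s'" if s': "s' \<in> U" for s'
  proof (rule sym, rule xi_eqI)
    show "0 \<le> x k" using x_pos[OF k] by simp
    show "ereal (x k) < L" using x_less_L[OF k] .
    show "\<sigma> (ereal (x k)) \<le> ereal s'" using s' unfolding U_def sigma_x_finite[OF k] by simp
    fix t assume t: "x k < t"
    have "ereal s' < \<sigma> (xnext (Suc k))"
      using s' sigma_plus_less_sigma_xnext[OF k] order.strict_trans[of "ereal s'" "ereal (\<sigma>plus k)"]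
      unfolding U_def by simp
    moreover have "0 < (1 + (\<Sum>i\<le>k. \<omega> i)\<^sup>2) * (t - x k)" using t by (simp add: add_pos_nonneg)
    then have "s' < \<sigma>plus k + (1 + (\<Sum>i\<le>k. \<omega> i)\<^sup>2) * (t - x k)"
      using s' unfolding U_def by simp
    ultimately have "ereal s' < min (\<sigma> (xnext (Suc k))) (ereal (\<sigma>plus k + (1 + (\<Sum>i\<le>k. \<omega> i)\<^sup>2) * (t - x k)))"
      by simp
    then show "ereal s' < \<sigma> (ereal t)" using sigma_right_of_x[OF k t] by (rule order_less_le_trans)
  qed
  have "s \<in> U" using s unfolding U_def sigma_x_finite[OF k] by simp
  then have "deriv \<xi> s = 0"
    by (intro deriv_xi_eqI[of U s "\<lambda>_. x k", OF _ _ xi_const DERIV_const]) (simp_all add: U_def)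
  then show ?thesis unfolding KL_H_eq Hth_zero by simp
qed

lemma xi_on_gap:
  fixes k :: nat and s :: real
  defines "c \<equiv> 1 + (\<Sum>i\<le>k. \<omega> i)\<^sup>2"
  assumes k: "enat k < \<kappa>" and s: "\<sigma>plus k < s" "ereal s < \<sigma> (xnext (Suc k))"
  shows "\<xi> s = x k + (s - \<sigma>plus k) / c" "x k < \<xi> s" "ereal (\<xi> s) < xnext (Suc k)"
proof -
  define a where "a = x k + (s - \<sigma>plus k) / c"
  have c: "0 < c" unfolding c_def by (simp add: add_pos_nonneg)
  have \<sigma>_gap: "\<sigma> (ereal t) = ereal (\<sigma>plus k + c * (t - x k))" if "x k < t" "ereal t \<le> xnext (Suc k)" for t
    using sigma_gap[OF k that] unfolding sigma_x_finite[OF k] sigma_plus_eq[OF k] c_def by simp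
  have a_gt: "x k < a" using s c unfolding a_def by simp
  have a_less: "ereal a < xnext (Suc k)"
  proof (cases "xnext (Suc k)")
    case (real X)
    then have "x k < X" using x_less_xnext_Suc[OF k] by simp
    then have "s < \<sigma>plus k + c * (X - x k)" using s(2) \<sigma>_gap[of X] real by simp
    then show ?thesis using real c unfolding a_def by (simp add: field_simps)
  qed (use x_less_xnext_Suc[OF k] in auto)
  have "\<xi> s = a"
  proof (rule xi_eqI)
    show "0 \<le> a" using a_gt x_pos[OF k] by simp
    show "ereal a < L" using a_less xnext_le_L[of "Suc k"] by simp
    show "\<sigma> (ereal a) \<le> ereal s" using \<sigma>_gap[OF a_gt less_imp_le[OF a_less]] c unfolding a_def by simp
    fix t assume t: "a < t"
    then have "x k < t" using a_gt by simp
    have "s < \<sigma>plus k + c * (t - x k)" using t c unfolding a_def by (simp add: field_simps)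
    then have "ereal s < min (\<sigma> (xnext (Suc k))) (ereal (\<sigma>plus k + c * (t - x k)))"
      using s(2) by simp
    then show "ereal s < \<sigma> (ereal t)"
      using sigma_right_of_x[OF k \<open>x k < t\<close>] unfolding c_def by (rule order_less_le_trans)
  qed
  then show "\<xi> s = x k + (s - \<sigma>plus k) / c" "x k < \<xi> s" "ereal (\<xi> s) < xnext (Suc k)"
    using a_gt a_less unfolding a_def by simp_all
qed

lemma KL_H_gap:
  assumes k: "enat k < \<kappa>" and s: "\<sigma>plus k < s" "ereal s < \<sigma> (xnext (Suc k))"
    and \<theta>: "0 < \<theta>" "\<theta> < pi" "cot \<theta> = (\<Sum>i\<le>k. \<omega> i)"
  shows "KL_H L \<kappa> x \<omega> \<upsilon> s = Hth \<theta>"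
proof -
  define W where "W = (\<Sum>i\<le>k. \<omega> i)"
  define c where "c = 1 + W\<^sup>2"
  have c: "0 < c" unfolding c_def by (simp add: add_pos_nonneg)
  obtain b where b: "s < b" "ereal b < \<sigma> (xnext (Suc k))" using ereal_dense2[OF s(2)] by auto
  define U where "U = {\<sigma>plus k<..<b}"
  have xi_affine: "x k + (s' - \<sigma>plus k) / c = \<xi> s'" if s': "s' \<in> U" for s'
    using xi_on_gap(1)[OF k, of s'] s' b(2) order.strict_trans[of "ereal s'" "ereal b"]
    unfolding U_def c_def W_def by simp
  have sU: "s \<in> U" using s b unfolding U_def by simp
  have "((\<lambda>s'. x k + (s' - \<sigma>plus k) / c) has_real_derivative 0 + (1 - 0) / c) (at s)"
    by (intro DERIV_add DERIV_const DERIV_cdivide DERIV_diff DERIV_ident)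
  with sU have "deriv \<xi> s = 1 / c"
    by (intro deriv_xi_eqI[of U s, OF _ _ xi_affine]) (simp_all add: U_def)
  moreover have "w (\<xi> s) = W"
    unfolding w_eq_sum W_def
    using atoms_below_gap[OF k xi_on_gap(2)[OF k s] less_imp_le[OF xi_on_gap(3)[OF k s]]] by simp
  moreover have "1 - 1 / c = W\<^sup>2 / c" using c unfolding c_def by (simp add: field_simps)
  moreover have "Hth \<theta> = mat2 (W\<^sup>2 / c) (W / c) (W / c) (1 / c)"
    unfolding W_def c_def by (rule Hth_cot[OF \<theta>])
  ultimately show ?thesis unfolding KL_H_eq by simp
qed

lemma KL_H_beyond:
  assumes "\<sigma> L < ereal s"
  shows "KL_H L \<kappa> x \<omega> \<upsilon> s = Hth 0"
proof -
  obtain l where l: "L = ereal l" using assms sigma_infinity L_pos by (cases L) auto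
  have "0 \<le> \<sigma> L" using L_pos sigma_ge[of L] by simp
  then obtain r where r: "\<sigma> L = ereal r" using assms by (cases "\<sigma> L") auto
  have xi_const: "l = \<xi> s'" if "s' \<in> {r<..}" for s'
    using xi_beyond_sigma_L[OF l] that r by simp
  have "s \<in> {r<..}" using assms r by simp
  then have "deriv \<xi> s = 0"
    by (intro deriv_xi_eqI[of "{r<..}" s "\<lambda>_. l", OF _ _ xi_const DERIV_const]) simp_all
  then show ?thesis unfolding KL_H_eq Hth_zero by simp
qed

definition interval_start :: "nat \<times> bool \<Rightarrow> ereal" where
  "interval_start st = (case st of
      (m, True) \<Rightarrow> ereal (\<sigma>\<^sub>r (x (m - 1)))
    | (m, False) \<Rightarrow> (if m = 0 then 0 else ereal (\<sigma>plus (m - 1))))"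

definition interval_end :: "nat \<times> bool \<Rightarrow> ereal" where
  "interval_end st = (case st of
      (m, True) \<Rightarrow> ereal (\<sigma>plus (m - 1))
    | (m, False) \<Rightarrow> \<sigma> (xnext m))"

definition interval_angle :: "nat \<times> bool \<Rightarrow> real" where
  "interval_angle st = (case st of
      (m, True) \<Rightarrow> 0
    | (m, False) \<Rightarrow> arccot (\<Sum>i<m. \<omega> i))"

definition admissible :: "nat \<times> bool \<Rightarrow> bool" where
  "admissible st \<longleftrightarrow> enat (fst st) \<le> \<kappa> \<and> (snd st \<longrightarrow> 0 < fst st \<and> 0 < \<upsilon> (fst st - 1))"

lemma admissible_next_imp_less_kappa:
  "admissible (next_interval \<upsilon> (m, False)) \<Longrightarrow> enat m < \<kappa>"
  unfolding admissible_def by (auto simp: Suc_ile_eq)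

lemma KL_H_on_interval:
  assumes st: "admissible st" and s: "interval_start st < ereal s" "ereal s < interval_end st"
  shows "KL_H L \<kappa> x \<omega> \<upsilon> s = Hth (interval_angle st)"
proof -
  obtain m b where st_eq: "st = (m, b)" by fastforce
  consider (plateau) k where "st = (Suc k, True)" "enat k < \<kappa>"
    | (initial) "st = (0, False)"
    | (gap) k where "st = (Suc k, False)" "enat k < \<kappa>"
    using st unfolding st_eq admissible_def by (cases b; cases m) (auto simp: Suc_ile_eq)
  then show ?thesis
  proof cases
    case (plateau k)
    then show ?thesis
      using KL_H_plateau[of k s] s sigma_plus_eq[of k]
      unfolding interval_start_def interval_end_def interval_angle_def sigma_x_finite[OF plateau(2)]
      by simp
  next
    case initial
    then show ?thesis
      using KL_H_initial[of s] s sigma_xnext_0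
      unfolding interval_start_def interval_end_def interval_angle_def arccot_def by simp
  next
    case (gap k)
    then show ?thesis
      using KL_H_gap[OF gap(2), of s] s arccot_bounds cot_arccot
      unfolding interval_start_def interval_end_def interval_angle_def
      by (simp add: lessThan_Suc_atMost)
  qed
qed

lemma interval_start_less_end:
  assumes st: "admissible st"
  shows "interval_start st < interval_end st"
proof -
  obtain m b where st_eq: "st = (m, b)" by fastforce
  consider (plateau) k where "st = (Suc k, True)" "enat k < \<kappa>" "0 < \<upsilon> k"
    | (initial) "st = (0, False)"
    | (gap) k where "st = (Suc k, False)" "enat k < \<kappa>"
    using st unfolding st_eq admissible_def by (cases b; cases m) (auto simp: Suc_ile_eq)
  then show ?thesis
  proof cases
    case (plateau k)
    then show ?thesis using sigma_plus_eq[OF plateau(2)] unfolding interval_start_def interval_end_def by simp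
  next
    case initial
    then show ?thesis unfolding interval_start_def interval_end_def using sigma_xnext_0 xnext_0_pos by simp
  next
    case (gap k)
    then show ?thesis unfolding interval_start_def interval_end_def using sigma_plus_less_sigma_xnext by simp
  qed
qed

lemma interval_start_next:
  assumes "admissible st" "admissible (next_interval \<upsilon> st)"
  shows "interval_start (next_interval \<upsilon> st) = interval_end st"
proof -
  obtain m b where st: "st = (m, b)" by fastforce
  show ?thesis
  proof (cases b)
    case True
    then show ?thesis using assms(1) unfolding st admissible_def interval_start_def interval_end_def
      by (cases m) auto
  next
    case False
    then have m: "enat m < \<kappa>" using admissible_next_imp_less_kappa assms(2) st by simp
    then have "xnext m = ereal (x m)" unfolding KL_xnext_def by simp
    moreover have "\<not> 0 < \<upsilon> m \<Longrightarrow> \<upsilon> m = 0" using upsilon_nonneg[OF m] by simp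
    ultimately show ?thesis
      using False sigma_x_finite[OF m] sigma_plus_eq[OF m]
      unfolding st interval_start_def interval_end_def by (cases "0 < \<upsilon> m") auto
  qed
qed

lemma interval_angle_next_not_cong:
  assumes "admissible st" "admissible (next_interval \<upsilon> st)"
  shows "\<nexists>z::int. interval_angle (next_interval \<upsilon> st) = interval_angle st + of_int z * pi"
proof
  assume "\<exists>z::int. interval_angle (next_interval \<upsilon> st) = interval_angle st + of_int z * pi"
  then obtain z :: int where z: "interval_angle (next_interval \<upsilon> st) = interval_angle st + of_int z * pi"
    by blast
  obtain m b where st: "st = (m, b)" by fastforce
  let ?c = "\<Sum>i<m. \<omega> i"
  show False
  proof (cases b)
    case True
    then have "arccot ?c = of_int z * pi" using z unfolding st interval_angle_def by simp
    then show False using arccot_bounds[of ?c] of_int_mult_pi_not_between[of z] by simp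
  next
    case False
    then have m: "enat m < \<kappa>" using admissible_next_imp_less_kappa assms(2) st by simp
    show False
    proof (cases "0 < \<upsilon> m")
      case True
      then have "of_int (- z) * pi = arccot ?c" using z False unfolding st interval_angle_def by simp
      then show False using arccot_bounds[of ?c] of_int_mult_pi_not_between[of "- z"] by simp
    next
      case no_plateau: False
      then have "\<omega> m \<noteq> 0" using upsilon_nonneg[OF m] mass_pos[OF m] by simp
      have "arccot (?c + \<omega> m) = arccot ?c + of_int z * pi"
        using z False no_plateau unfolding st interval_angle_def by simp
      then have e: "arctan ?c - arctan (?c + \<omega> m) = of_int z * pi" unfolding arccot_def by simp
      have "\<bar>of_int z * pi\<bar> < pi" unfolding e[symmetric]
        using arctan_bounded[of ?c] arctan_bounded[of "?c + \<omega> m"] by linarith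
      then have "z = 0" by (rule of_int_mult_pi_abs_less)
      then have "arctan ?c = arctan (?c + \<omega> m)" using e by simp
      then show False using \<open>\<omega> m \<noteq> 0\<close> by (metis add_cancel_left_right arctan_eq_iff)
    qed
  qed
qed

section \<open>Infinite strings: \<open>\<sigma>(x\<^sub>m) \<longrightarrow> \<sigma>(L)\<close>\<close>

lemma upsilon_series_x_tendsto:
  assumes inf: "\<kappa> = \<infinity>"
  shows "(\<lambda>m. \<Sum>j. if enat j < \<kappa> \<and> ereal (x j) < ereal (x m) then ennreal (\<upsilon> j) else 0)
    \<longlonglongrightarrow> (\<Sum>j. if enat j < \<kappa> \<and> ereal (x j) < L then ennreal (\<upsilon> j) else 0)"
proof -
  define f where "f m j = (if enat j < \<kappa> \<and> ereal (x j) < ereal (x m) then ennreal (\<upsilon> j) else 0)" for m j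
  have f_inc: "incseq (\<lambda>m. f m j)" for j
    using inf x_mono by (intro incseq_SucI) (auto simp: f_def intro: order_less_le_trans)
  have "(SUP m. f m j) = (if enat j < \<kappa> \<and> ereal (x j) < L then ennreal (\<upsilon> j) else 0)" for j
  proof -
    have "(SUP m. f m j) = ennreal (\<upsilon> j)"
      by (rule SUP_eq_attained[where n = "Suc j"]) (use inf x_less_Suc in \<open>simp_all add: f_def\<close>)
    then show ?thesis using x_less_L inf by simp
  qed
  then have "(\<Sum>j. if enat j < \<kappa> \<and> ereal (x j) < L then ennreal (\<upsilon> j) else 0) = (SUP m. \<Sum>j. f m j)"
    using ennreal_suminf_SUP_eq[OF f_inc] by simp
  moreover have "incseq (\<lambda>m. \<Sum>j. f m j)"
    using f_inc by (intro incseq_SucI suminf_le summableI) (auto simp: incseq_Suc_iff)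
  ultimately show ?thesis unfolding f_def[symmetric] by (simp add: LIMSEQ_SUP)
qed

lemma SUP_indicator_below_x_mult:
  fixes f :: "real \<Rightarrow> ennreal"
  assumes inf: "\<kappa> = \<infinity>"
  shows "(SUP m. indicator {t. 0 \<le> t \<and> ereal t < ereal (x m)} t * f t)
    = indicator {t. 0 \<le> t \<and> ereal t < L} t * f t"
proof (cases "0 \<le> t \<and> ereal t < L")
  case True
  then have "eventually (\<lambda>j. ereal t < ereal (x j)) sequentially"
    using order_tendstoD(1)[OF x_tendsto_L[OF inf]] by blast
  then obtain n where "t < x n" by (auto simp: eventually_sequentially)
  then have "(SUP m. indicator {t. 0 \<le> t \<and> ereal t < ereal (x m)} t * f t) = f t"
    using True by (intro SUP_eq_attained[where n = n]) (simp_all add: indicator_def)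
  then show ?thesis using True by simp
next
  case False
  have "\<not> (0 \<le> t \<and> t < x m)" for m
    using False x_less_L[of m] inf order.strict_trans[of "ereal t" "ereal (x m)"] by auto
  then show ?thesis using False by simp
qed

lemma w2_integral_x_tendsto:
  assumes inf: "\<kappa> = \<infinity>"
  shows "(\<lambda>m. w2_integral (x m))
    \<longlonglongrightarrow> (\<integral>\<^sup>+ t. indicator {t. 0 \<le> t \<and> ereal t < L} t * ennreal ((w t)\<^sup>2) \<partial>lborel)"
proof -
  define h where "h m t = indicator {t. 0 \<le> t \<and> ereal t < ereal (x m)} t * ennreal ((w t)\<^sup>2)" for m t
  have h_inc: "incseq h"
  proof (rule incseq_SucI, rule le_funI)
    fix m t show "h m t \<le> h (Suc m) t"
      unfolding h_def using x_mono[of m "Suc m"] inf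
      by (auto simp: indicator_def intro: order_less_le_trans)
  qed
  have "h m \<in> borel_measurable lborel" for m
  proof -
    have "finite (atoms_below (x m))" using atoms_below_x inf by simp
    then have "h m = (\<lambda>t. indicator {0..<x m} t * ennreal ((w_restr (atoms_below (x m)) t)\<^sup>2))"
      using w_eq_w_restr by (auto simp: h_def indicator_def)
    then show ?thesis by simp
  qed
  then have "(SUP m. \<integral>\<^sup>+ t. h m t \<partial>lborel) = (\<integral>\<^sup>+ t. (SUP m. h m t) \<partial>lborel)"
    using nn_integral_monotone_convergence_SUP[OF h_inc] by simp
  also have "(\<lambda>t. SUP m. h m t) = (\<lambda>t. indicator {t. 0 \<le> t \<and> ereal t < L} t * ennreal ((w t)\<^sup>2))"
    unfolding h_def by (rule ext, rule SUP_indicator_below_x_mult[OF inf])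
  finally have "(\<integral>\<^sup>+ t. indicator {t. 0 \<le> t \<and> ereal t < L} t * ennreal ((w t)\<^sup>2) \<partial>lborel)
      = (SUP m. w2_integral (x m))"
    unfolding h_def by simp
  moreover have "incseq (\<lambda>m. w2_integral (x m))"
    using h_inc by (intro incseq_SucI nn_integral_mono) (auto simp: h_def incseq_Suc_iff le_fun_def)
  ultimately show ?thesis by (simp add: LIMSEQ_SUP)
qed

lemma sigma_x_tendsto_sigma_L:
  assumes inf: "\<kappa> = \<infinity>"
  shows "(\<lambda>m. \<sigma> (ereal (x m))) \<longlonglongrightarrow> \<sigma> L"
proof -
  let ?A = "\<lambda>y. enn2ereal (\<Sum>j. if enat j < \<kappa> \<and> ereal (x j) < y then ennreal (\<upsilon> j) else 0)"
  let ?B = "\<lambda>y. enn2ereal (\<integral>\<^sup>+ t. indicator {t. 0 \<le> t \<and> ereal t < y} t * ennreal ((w t)\<^sup>2) \<partial>lborel)"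
  have A: "(\<lambda>m. ?A (ereal (x m))) \<longlonglongrightarrow> ?A L"
    by (rule isCont_tendsto_compose[OF continuous_at_enn2ereal upsilon_series_x_tendsto[OF inf]])
  have B: "(\<lambda>m. ?B (ereal (x m))) \<longlonglongrightarrow> ?B L"
    by (rule isCont_tendsto_compose[OF continuous_at_enn2ereal w2_integral_x_tendsto[OF inf]])
  have xA: "(\<lambda>m. ereal (x m) + ?A (ereal (x m))) \<longlonglongrightarrow> L + ?A L"
    by (rule tendsto_add_ereal_nonneg[OF _ _ x_tendsto_L[OF inf] A]) (use L_pos in auto)
  have "L + ?A L \<noteq> - \<infinity>" using L_pos by auto
  then have "(\<lambda>m. ereal (x m) + ?A (ereal (x m)) + ?B (ereal (x m))) \<longlonglongrightarrow> L + ?A L + ?B L"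
    by (rule tendsto_add_ereal_nonneg[OF _ _ xA B]) simp
  then show ?thesis unfolding KL_sigma_def .
qed

definition num_intervals :: enat where
  "num_intervals = (if \<kappa> = \<infinity> then \<infinity> else enat (interval_index \<upsilon> (the_enat \<kappa>)))"

definition breakpoint :: "nat \<Rightarrow> ereal" where
  "breakpoint n = interval_end (interval_seq \<upsilon> n)"

primrec lifted_angle :: "nat \<Rightarrow> real" where
  "lifted_angle 0 = pi / 2"
| "lifted_angle (Suc n) = lift_above (lifted_angle n) (interval_angle (interval_seq \<upsilon> (Suc n)))"

lemma lifted_angle_cong: "\<exists>z::int. lifted_angle n = interval_angle (interval_seq \<upsilon> n) + of_int z * pi"
proof (cases n)
  case 0
  then show ?thesis by (intro exI[of _ 0]) (simp add: interval_angle_def arccot_def)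
qed (simp add: lift_above_cong)

lemma Hth_lifted_angle: "Hth (lifted_angle n) = Hth (interval_angle (interval_seq \<upsilon> n))"
  using lifted_angle_cong[of n] Hth_add_int_mult_pi by auto

lemma lifted_angle_step:
  assumes "admissible (interval_seq \<upsilon> n)" "admissible (interval_seq \<upsilon> (Suc n))"
  shows "lifted_angle n < lifted_angle (Suc n) \<and> lifted_angle (Suc n) < lifted_angle n + pi"
proof
  show "lifted_angle n < lifted_angle (Suc n)" using lift_above_gt by simp
  obtain z0 :: int where z0: "lifted_angle n = interval_angle (interval_seq \<upsilon> n) + of_int z0 * pi"
    using lifted_angle_cong by blast
  have "\<nexists>z::int. interval_angle (interval_seq \<upsilon> (Suc n)) = lifted_angle n + of_int z * pi"
  proof
    assume "\<exists>z::int. interval_angle (interval_seq \<upsilon> (Suc n)) = lifted_angle n + of_int z * pi"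
    then obtain z :: int where "interval_angle (interval_seq \<upsilon> (Suc n)) = lifted_angle n + of_int z * pi"
      by blast
    then have "interval_angle (interval_seq \<upsilon> (Suc n)) = interval_angle (interval_seq \<upsilon> n) + of_int (z0 + z) * pi"
      unfolding z0 by (simp add: algebra_simps)
    then show False
      using interval_angle_next_not_cong[OF assms(1)] assms(2) unfolding interval_seq_Suc by blast
  qed
  then show "lifted_angle (Suc n) < lifted_angle n + pi" using lift_above_less by simp
qed

lemma admissible_interval_seq:
  assumes "enat n \<le> num_intervals"
  shows "admissible (interval_seq \<upsilon> n)"
proof -
  have "enat (fst (interval_seq \<upsilon> n)) \<le> \<kappa>"
  proof (cases "\<kappa> = \<infinity>")
    case False
    then obtain K where K: "\<kappa> = enat K" by auto
    then have "n \<le> interval_index \<upsilon> K" using assms unfolding num_intervals_def by simp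
    then have "fst (interval_seq \<upsilon> n) \<le> fst (interval_seq \<upsilon> (interval_index \<upsilon> K))"
      using incseq_fst_interval_seq[of \<upsilon>] unfolding incseq_def by blast
    then show ?thesis using K interval_seq_index by simp
  qed simp
  then show ?thesis using interval_seq_plateau unfolding admissible_def by blast
qed

lemma admissible_interval_seq_Suc:
  assumes "enat (Suc n) \<le> num_intervals"
  shows "admissible (interval_seq \<upsilon> n)" "admissible (interval_seq \<upsilon> (Suc n))"
  using admissible_interval_seq assms by (meson Suc_ile_eq less_imp_le)+

lemma interval_start_Suc:
  assumes "enat (Suc n) \<le> num_intervals"
  shows "interval_start (interval_seq \<upsilon> (Suc n)) = breakpoint n"
  using interval_start_next admissible_interval_seq_Suc[OF assms]
  unfolding breakpoint_def interval_seq_Suc by blast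

lemma breakpoint_less_Suc:
  assumes "enat (Suc n) \<le> num_intervals"
  shows "breakpoint n < breakpoint (Suc n)"
  using interval_start_less_end[OF admissible_interval_seq[OF assms]] interval_start_Suc[OF assms]
  unfolding breakpoint_def by simp

lemma breakpoint_0_pos: "0 < breakpoint 0"
  unfolding breakpoint_def interval_end_def using sigma_xnext_0 xnext_0_pos by simp

lemma breakpoint_last:
  assumes "num_intervals \<noteq> \<infinity>"
  shows "breakpoint (the_enat num_intervals) = \<sigma> L"
proof -
  obtain K where K: "\<kappa> = enat K" using assms unfolding num_intervals_def by (cases \<kappa>) auto
  then have "the_enat num_intervals = interval_index \<upsilon> K" unfolding num_intervals_def by simp
  moreover have "xnext K = L" using K unfolding KL_xnext_def by simp
  ultimately show ?thesis by (simp add: breakpoint_def interval_seq_index interval_end_def)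
qed

lemma lifted_angle_last_not_int_mult_pi:
  assumes "num_intervals \<noteq> \<infinity>"
  shows "\<nexists>n::int. lifted_angle (the_enat num_intervals) = of_int n * pi"
proof
  obtain K where K: "\<kappa> = enat K" using assms unfolding num_intervals_def by (cases \<kappa>) auto
  obtain z :: int where z: "lifted_angle (the_enat num_intervals) = arccot (\<Sum>i<K. \<omega> i) + of_int z * pi"
    using lifted_angle_cong[of "interval_index \<upsilon> K"] K
    unfolding num_intervals_def interval_seq_index interval_angle_def by auto
  assume "\<exists>n::int. lifted_angle (the_enat num_intervals) = of_int n * pi"
  then obtain n :: int where "lifted_angle (the_enat num_intervals) = of_int n * pi" by blast
  then have "arccot (\<Sum>i<K. \<omega> i) = of_int (n - z) * pi" using z by (simp add: algebra_simps)
  then show False using arccot_bounds[of "\<Sum>i<K. \<omega> i"] of_int_mult_pi_not_between[of "n - z"] by simp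
qed

lemma breakpoint_tendsto:
  assumes "num_intervals = \<infinity>"
  shows "breakpoint \<longlonglongrightarrow> \<sigma> L"
proof -
  have inf: "\<kappa> = \<infinity>" using assms unfolding num_intervals_def by (cases "\<kappa> = \<infinity>") auto
  have "incseq breakpoint"
    using breakpoint_less_Suc assms by (intro incseq_SucI less_imp_le) simp
  then have lim: "breakpoint \<longlonglongrightarrow> (SUP n. breakpoint n)" by (rule LIMSEQ_SUP)
  have "breakpoint \<circ> interval_index \<upsilon> = (\<lambda>m. \<sigma> (ereal (x m)))"
    using inf unfolding comp_def breakpoint_def interval_seq_index interval_end_def KL_xnext_def by simp
  then have "(\<lambda>m. \<sigma> (ereal (x m))) \<longlonglongrightarrow> (SUP n. breakpoint n)"
    using LIMSEQ_subseq_LIMSEQ[OF lim strict_mono_interval_index[of \<upsilon>]] by simp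
  then have "(SUP n. breakpoint n) = \<sigma> L"
    using sigma_x_tendsto_sigma_L[OF inf] LIMSEQ_unique by blast
  then show ?thesis using lim by simp
qed

text \<open>Away from the countably many breakpoints every \<open>s \<in> [0, \<sigma>(L))\<close> lies in the interior
  of one of the enumerated intervals.\<close>

lemma KL_H_between_breakpoints:
  "AE s in lborel. 0 \<le> s \<and> ereal s < \<sigma> L \<longrightarrow>
     (\<forall>k. enat k \<le> num_intervals \<longrightarrow> (if k = 0 then 0 else breakpoint (k - 1)) \<le> ereal s
        \<longrightarrow> ereal s < breakpoint k \<longrightarrow> KL_H L \<kappa> x \<omega> \<upsilon> s = Hth (lifted_angle k))"
proof -
  have "countable (insert 0 (range (\<lambda>n. real_of_ereal (breakpoint n))))" by simp
  then have "AE s in lborel. s \<notin> insert 0 (range (\<lambda>n. real_of_ereal (breakpoint n)))"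
    by (intro AE_not_in countable_imp_null_set_lborel)
  then show ?thesis
  proof (rule AE_mp, intro AE_I2 impI allI)
    fix s k
    assume s_ne: "s \<notin> insert 0 (range (\<lambda>n. real_of_ereal (breakpoint n)))"
      and k: "enat k \<le> num_intervals"
      and start: "(if k = 0 then 0 else breakpoint (k - 1)) \<le> ereal s" and s: "ereal s < breakpoint k"
    have "interval_start (interval_seq \<upsilon> k) = (if k = 0 then 0 else breakpoint (k - 1))"
      using interval_start_Suc k by (cases k) (simp_all add: interval_start_def)
    moreover have "(if k = 0 then 0 else breakpoint (k - 1)) \<noteq> ereal s"
    proof (cases "k = 0")
      case False
      show ?thesis
      proof
        assume "(if k = 0 then 0 else breakpoint (k - 1)) = ereal s"
        then have "real_of_ereal (breakpoint (k - 1)) = s" using False by simp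
        then show False using s_ne by auto
      qed
    qed (use s_ne in \<open>simp add: zero_ereal_def\<close>)
    ultimately have "interval_start (interval_seq \<upsilon> k) < ereal s" using start by simp
    then show "KL_H L \<kappa> x \<omega> \<upsilon> s = Hth (lifted_angle k)"
      using KL_H_on_interval[OF admissible_interval_seq[OF k]] s Hth_lifted_angle
      unfolding breakpoint_def by simp
  qed
qed

lemma hamburger_hamiltonian_KL_H: "hamburger_hamiltonian (\<sigma> L) (KL_H L \<kappa> x \<omega> \<upsilon>)"
  unfolding hamburger_hamiltonian_def
proof (intro exI conjI)
  show "\<forall>k. enat (Suc k) \<le> num_intervals \<longrightarrow> lifted_angle k < lifted_angle (Suc k)
      \<and> lifted_angle (Suc k) < lifted_angle k + pi"
    using lifted_angle_step admissible_interval_seq_Suc by blast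
qed (use breakpoint_0_pos breakpoint_less_Suc lifted_angle_last_not_int_mult_pi breakpoint_last
      breakpoint_tendsto KL_H_between_breakpoints in auto)

end

theorem mainTheorem9:
  fixes L :: ereal and \<kappa> :: enat and x \<omega> \<upsilon> :: "nat \<Rightarrow> real"
  assumes "KL_string L \<kappa> x \<omega> \<upsilon>"
  shows "(AE s in lborel. 0 \<le> s \<longrightarrow>
           ((0 < s \<and> ereal s < KL_xnext L \<kappa> x 0 \<longrightarrow> KL_H L \<kappa> x \<omega> \<upsilon> s = Hth (pi / 2)) \<and>
            (\<forall>k. enat k < \<kappa> \<and> KL_sigma \<kappa> x \<omega> \<upsilon> (ereal (x k)) < ereal s
                  \<and> s < KL_sigma_plus \<kappa> x \<omega> \<upsilon> k \<longrightarrow> KL_H L \<kappa> x \<omega> \<upsilon> s = Hth 0) \<and>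
            (\<forall>k \<theta>. enat k < \<kappa> \<and> KL_sigma_plus \<kappa> x \<omega> \<upsilon> k < s
                  \<and> ereal s < KL_sigma \<kappa> x \<omega> \<upsilon> (KL_xnext L \<kappa> x (Suc k))
                  \<and> 0 < \<theta> \<and> \<theta> < pi \<and> cot \<theta> = (\<Sum>i\<le>k. \<omega> i)
                  \<longrightarrow> KL_H L \<kappa> x \<omega> \<upsilon> s = Hth \<theta>) \<and>
            (KL_sigma \<kappa> x \<omega> \<upsilon> L < ereal s \<longrightarrow> KL_H L \<kappa> x \<omega> \<upsilon> s = Hth 0)))
         \<and> hamburger_hamiltonian (KL_sigma \<kappa> x \<omega> \<upsilon> L) (KL_H L \<kappa> x \<omega> \<upsilon>)"
proof -
  interpret krein_langer_string L \<kappa> x \<omega> \<upsilon> by unfold_locales (rule assms)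
  show ?thesis
    using KL_H_initial KL_H_plateau KL_H_gap KL_H_beyond hamburger_hamiltonian_KL_H
    by (intro conjI AE_I2 impI allI) blast+
qed

end
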